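(* Let $M$, $x$, $T$, $B$, the encoding $\langle\cdot\rangle$ and the coin set $\mathcal{C}$ be as in the context. Let $1\le j\le T$, and let $C$ be the configuration of $M$ on input $x$ at time step $j$, that is, after $j-1$ steps of computation, with the convention that a halting configuration stays put. Run the greedy change-making process with coin set $\mathcal{C}$, starting from the remaining amount $W_C:=\langle C\rangle\cdot B^{(T-j)T}$. Then the next $T-1$ or $T-2$ coins selected reduce the remaining amount exactly to $W_{\Delta(C)}:=\langle\Delta(C)\rangle\cdot B^{(T-j-1)T}$. Here $\Delta(C)$ is the successor configuration of $C$ under $\delta$, with $\Delta(C)=C$ if $C$ is halting, and $B^{(-1)T}$ is read as $0$.
   Context: Turing machine. $M=\langle Q,\Gamma,\Sigma,\delta,q_0,q_{\mathrm{accept}},q_{\mathrm{reject}}\rangle$ is a deterministic single-tape Turing machine: - $\perp\in\Gamma$ is the blank symbol and $\Sigma\subseteq\Gamma\setminus\{\perp\}$. - $F=\{q_{\mathrm{accept}},q_{\mathrm{reject}}\}$ is the set of halting states. - $\delta:(Q\setminus F)\times\Gamma\to Q\times\Gamma\times\{L,R\}$ is the transition function. Assumptions on $M$: - The first tape cell always holds a left endmarker $\$\in\Gamma$. Whenever the head reads $\$$ in a state $q\notin F$, we have $\delta(q,\$)=(q',\$,R)$ for some $q'$. - Before entering a halting state, the head moves to the endmarker, then overwrites cells 2 and 3 with $\perp$, and halts over cell 2 in the halting state. - On input $x$ of length $n$, $M$ halts within $T=C_M n^{\ell}$ steps, where $T\ge n+3$. Hence only tape cells $1,\dots,T$ are used,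 and the head never reaches cell $T$. A configuration consists of a state $q$, a head position $h$ with $1\le h\le T$, and tape contents $a_1\cdots a_T\in\Gamma^T$. The configuration at time step 1 has state $q_0$, head position 1, and tape $\$\,x_1\cdots x_n\perp^{T-n-1}$. Numerical encoding: - Fix bijections $f:Q\to\{1,\dots,s\}$ and $g:\Gamma\to\{1,\dots,k\}$, where $s=|Q|$ and $k=|\Gamma|$. - Encode a pair $(q,a)$ by $p(q,a):=f(q)k+g(a)$. - Fix an integer base $B\ge(s+1)k+2$. - A digit string $d_1\cdots d_T$ in base $B$ denotes $\sum_{i=1}^T d_iB^{T-i}$. - For a configuration $C$ with state $q$, head position $h$ and tape $a_1\cdots a_T$, set $\langle C\rangle$ to be the digit string with $d_h=p(q,a_h)$ and $d_i=g(a_i)$ for $i\ne h$. Coin set $\mathcal{C}$ (with $B^{(-1)T}:=0$) consists of exactly the following three kinds of coins. (i) Copy coins. For $1\le i,j\le T$ and $a\in\Gamma$: $$c_{\mathrm{copy}}(a,i,j)=g(a)B^{T-i}\big(B^{(T-j)T}-B^{(T-j-1)T}\big).$$ (ii) Transition coins. For $2\le i\le T-1$, $1\le j\le T$, $q\in Q$, and $a^-,a,a^+\in\Gamma$: $$c_{\mathrm{transition}}(q,a^-,a,a^+,i,j)=u\,B^{(T-j)T}-v\,B^{(T-j-1)T},$$ where $u=g(a^-)B^{T-i+1}+p(q,a)B^{T-i}+g(a^+)B^{T-i-1}$ and $v$ is defined by cases: - if $q\notin F$ and $\delta(q,a)=(q',a',L)$: $v=p(q',a^-)B^{T-i+1}+g(a')B^{T-i}+g(a^+)B^{T-i-1}$;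 - if $q\notin F$ and $\delta(q,a)=(q',a',R)$: $v=g(a^-)B^{T-i+1}+g(a')B^{T-i}+p(q',a^+)B^{T-i-1}$; - if $q\in F$: $v=u$. (iii) Left-end transition coins. For $q\in Q\setminus F$, $a^+\in\Gamma$, and $1\le j\le T$, with $\delta(q,\$)=(q',\$,R)$: $$c^{\text{left-end}}_{\mathrm{transition}}(q,a^+,j)=\big(p(q,\$)B^{T-1}+g(a^+)B^{T-2}\big)B^{(T-j)T}-\big(g(\$)B^{T-1}+p(q',a^+)B^{T-2}\big)B^{(T-j-1)T}.$$ Greedy change-making process: from a remaining amount $W'$, repeatedly select the largest coin in $\mathcal{C}$ that is at most $W'$, and subtract it from $W'$. *)

theory Defs
  imports Main
begin

datatype dir = L | R

text \<open>A configuration: (state, head position, tape). Tape cells are indexed 1,2,...;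
  only cells 1..T matter.\<close>
type_synonym ('q,'a) config = "'q \<times> nat \<times> (nat \<Rightarrow> 'a)"

definition tm_step :: "('q \<Rightarrow> 'a \<Rightarrow> 'q \<times> 'a \<times> dir) \<Rightarrow> 'q set \<Rightarrow> ('q,'a) config \<Rightarrow> ('q,'a) config" where
  "tm_step \<delta> F c = (case c of (q, h, tp) \<Rightarrow>
     if q \<in> F then c
     else (case \<delta> q (tp h) of (q', a', d) \<Rightarrow>
             (q', if d = L then h - 1 else h + 1, tp(h := a'))))"

definition init_config :: "'q \<Rightarrow> 'a \<Rightarrow> 'a \<Rightarrow> 'a list \<Rightarrow> ('q,'a) config" where
  "init_config q0 endm blank x =
     (q0, 1, (\<lambda>i. if i = 1 then endm
                  else if 2 \<le> i \<and> i \<le> length x + 1 then x ! (i - 2) else blank))"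

definition config_at :: "('q \<Rightarrow> 'a \<Rightarrow> 'q \<times> 'a \<times> dir) \<Rightarrow> 'q set \<Rightarrow> 'q \<Rightarrow> 'a \<Rightarrow> 'a \<Rightarrow> 'a list
     \<Rightarrow> nat \<Rightarrow> ('q,'a) config" where
  "config_at \<delta> F q0 endm blank x j = (tm_step \<delta> F ^^ (j - 1)) (init_config q0 endm blank x)"

definition pcode :: "('q \<Rightarrow> nat) \<Rightarrow> ('a \<Rightarrow> nat) \<Rightarrow> nat \<Rightarrow> 'q \<Rightarrow> 'a \<Rightarrow> int" where
  "pcode f g k q a = int (f q) * int k + int (g a)"

definition enc :: "('q \<Rightarrow> nat) \<Rightarrow> ('a \<Rightarrow> nat) \<Rightarrow> nat \<Rightarrow> int \<Rightarrow> nat \<Rightarrow> ('q,'a) config \<Rightarrow> int" where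
  "enc f g k B T c = (case c of (q, h, tp) \<Rightarrow>
     (\<Sum>i = 1..T. (if i = h then pcode f g k q (tp i) else int (g (tp i))) * B ^ (T - i)))"

text \<open>B^(e T) for an integer e, with B^((-1)T) := 0 (and generally 0 for e < 0).\<close>
definition bpow :: "int \<Rightarrow> nat \<Rightarrow> int \<Rightarrow> int" where
  "bpow B T e = (if e < 0 then 0 else B ^ (nat e * T))"

definition copy_coins :: "('a \<Rightarrow> nat) \<Rightarrow> int \<Rightarrow> nat \<Rightarrow> int set" where
  "copy_coins g B T =
     {int (g a) * B ^ (T - i) * (bpow B T (int T - int j) - bpow B T (int T - int j - 1))
      | a i j. 1 \<le> i \<and> i \<le> T \<and> 1 \<le> j \<and> j \<le> T}"

definition trans_u :: "('q \<Rightarrow> nat) \<Rightarrow> ('a \<Rightarrow> nat) \<Rightarrow> nat \<Rightarrow> int \<Rightarrow> nat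
     \<Rightarrow> 'q \<Rightarrow> 'a \<Rightarrow> 'a \<Rightarrow> 'a \<Rightarrow> nat \<Rightarrow> int" where
  "trans_u f g k B T q am a ap i =
     int (g am) * B ^ (T - i + 1) + pcode f g k q a * B ^ (T - i) + int (g ap) * B ^ (T - i - 1)"

definition trans_v :: "('q \<Rightarrow> 'a \<Rightarrow> 'q \<times> 'a \<times> dir) \<Rightarrow> 'q set \<Rightarrow> ('q \<Rightarrow> nat) \<Rightarrow> ('a \<Rightarrow> nat)
     \<Rightarrow> nat \<Rightarrow> int \<Rightarrow> nat \<Rightarrow> 'q \<Rightarrow> 'a \<Rightarrow> 'a \<Rightarrow> 'a \<Rightarrow> nat \<Rightarrow> int" where
  "trans_v \<delta> F f g k B T q am a ap i =
     (if q \<in> F then trans_u f g k B T q am a ap i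
      else (case \<delta> q a of (q', a', d) \<Rightarrow>
        (if d = L then
           pcode f g k q' am * B ^ (T - i + 1) + int (g a') * B ^ (T - i) + int (g ap) * B ^ (T - i - 1)
         else
           int (g am) * B ^ (T - i + 1) + int (g a') * B ^ (T - i) + pcode f g k q' ap * B ^ (T - i - 1))))"

definition transition_coins :: "('q \<Rightarrow> 'a \<Rightarrow> 'q \<times> 'a \<times> dir) \<Rightarrow> 'q set \<Rightarrow> ('q \<Rightarrow> nat) \<Rightarrow> ('a \<Rightarrow> nat)
     \<Rightarrow> nat \<Rightarrow> int \<Rightarrow> nat \<Rightarrow> int set" where
  "transition_coins \<delta> F f g k B T =
     {trans_u f g k B T q am a ap i * bpow B T (int T - int j)
        - trans_v \<delta> F f g k B T q am a ap i * bpow B T (int T - int j - 1)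
      | q am a ap i j. 2 \<le> i \<and> i \<le> T - 1 \<and> 1 \<le> j \<and> j \<le> T}"

definition leftend_coins :: "('q \<Rightarrow> 'a \<Rightarrow> 'q \<times> 'a \<times> dir) \<Rightarrow> 'q set \<Rightarrow> ('q \<Rightarrow> nat) \<Rightarrow> ('a \<Rightarrow> nat)
     \<Rightarrow> nat \<Rightarrow> int \<Rightarrow> nat \<Rightarrow> 'a \<Rightarrow> int set" where
  "leftend_coins \<delta> F f g k B T endm =
     {(pcode f g k q endm * B ^ (T - 1) + int (g ap) * B ^ (T - 2)) * bpow B T (int T - int j)
        - (int (g endm) * B ^ (T - 1) + pcode f g k (fst (\<delta> q endm)) ap * B ^ (T - 2))
            * bpow B T (int T - int j - 1)
      | q ap j. q \<notin> F \<and> 1 \<le> j \<and> j \<le> T}"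

definition coin_set :: "('q \<Rightarrow> 'a \<Rightarrow> 'q \<times> 'a \<times> dir) \<Rightarrow> 'q set \<Rightarrow> ('q \<Rightarrow> nat) \<Rightarrow> ('a \<Rightarrow> nat)
     \<Rightarrow> nat \<Rightarrow> int \<Rightarrow> nat \<Rightarrow> 'a \<Rightarrow> int set" where
  "coin_set \<delta> F f g k B T endm =
     copy_coins g B T \<union> transition_coins \<delta> F f g k B T \<union> leftend_coins \<delta> F f g k B T endm"

definition greedy_step :: "int set \<Rightarrow> int \<Rightarrow> int" where
  "greedy_step Cs W = W - Max {c \<in> Cs. c \<le> W}"

end

theory Submission
  imports Defs
begin

text \<open>Stage \<open>j\<close> of the greedy process rewrites the encoding of \<open>C\<close>, sitting at level
  \<open>B^((T-j)T)\<close>, position by position into the encoding of \<open>\<Delta>(C)\<close> one level lower. Every coin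
  is \<open>X B^((T-j')T) - Y B^((T-j'-1)T)\<close> for a head \<open>(X, Y)\<close> spanning at most three digit
  positions. After the first \<open>r\<close> positions have been rewritten the remaining amount is
  \<open>U B^((T-j)T) + L B^((T-j-1)T)\<close>, where \<open>U\<close> is the untouched suffix of \<open>\<langle>C\<rangle>\<close> and \<open>L\<close> the
  rewritten prefix of \<open>\<langle>\<Delta>(C)\<rangle>\<close>. Coins of earlier levels exceed this amount and coins of later
  levels lie below every coin of level \<open>j\<close>; among the coins of level \<open>j\<close> only those whose head
  starts at position \<open>r + 1\<close> compete, and since state digits exceed all tape digits the greedy
  choice is the copy coin of digit \<open>r + 1\<close> away from the tape head, and the transition (or
  left-end) coin covering the window around it. That window has three cells, or two when the
  head reads the endmarker, which accounts for \<open>T - 2\<close> or \<open>T - 1\<close> coins.\<close>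

lemma low_digit_unique:
  fixes x y x' y' M :: int
  assumes "0 \<le> y" "y < M" "0 \<le> y'" "y' < M" "x * M + y = x' * M + y'"
  shows "x = x' \<and> y = y'"
proof -
  have "y = (y + x * M) mod M" "y' = (y' + x' * M) mod M"
    using assms by simp_all
  moreover have "y + x * M = y' + x' * M" using assms(5) by (simp add: add.commute)
  ultimately have "y = y'" by metis
  then show ?thesis using assms by simp
qed

lemma append_digit_less:
  fixes x y B :: int
  assumes "0 \<le> x" "x < B ^ k" "0 \<le> y" "y < B"
  shows "x * B + y < B ^ Suc k"
proof -
  have "(x + 1) * B \<le> B ^ k * B" using assms by (intro mult_right_mono) auto
  then show ?thesis using assms by (simp add: algebra_simps)
qed

lemma append_digit_ge:
  fixes x y B :: int
  assumes "B ^ k \<le> x" "0 \<le> y" "0 \<le> B"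
  shows "B ^ Suc k \<le> x * B + y"
  using mult_right_mono[OF assms(1) assms(3)] assms(2) by (simp add: mult.commute)

lemma scaled_less:
  fixes N B :: int
  assumes "0 < B" "N < B ^ s"
  shows "N * B ^ k < B ^ (s + k)"
  using assms by (simp add: power_add)

lemma scaled_ge:
  fixes N B :: int
  assumes "0 \<le> B" "B ^ s \<le> N"
  shows "B ^ (s + k) \<le> N * B ^ k"
  using assms by (simp add: power_add mult_right_mono)

lemma pow_exp_less:
  fixes X B :: int
  assumes "1 < B" "B ^ n \<le> X" "X < B ^ m"
  shows "n < m"
  using assms power_strict_increasing_iff[of B n m] by linarith

lemma pow_span_unique:
  fixes X B :: int
  assumes "1 < B" "B ^ n \<le> X" "X < B ^ Suc n" "B ^ m \<le> X" "X < B ^ Suc m"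
  shows "n = m"
  using pow_exp_less[of B n X "Suc m"] pow_exp_less[of B m X "Suc n"] assms by simp

lemma digits3_scale:
  fixes x y z B :: int
  assumes "i < T"
  shows "x * B ^ (T - i + 1) + y * B ^ (T - i) + z * B ^ (T - i - 1) = ((x * B + y) * B + z) * B ^ (T - i - 1)"
proof -
  have "T - i + 1 = Suc (Suc (T - i - 1))" "T - i = Suc (T - i - 1)" using assms by arith+
  then show ?thesis by (simp add: algebra_simps)
qed

lemma digits2_scale:
  fixes x y B :: int
  assumes "2 \<le> T"
  shows "x * B ^ (T - 1) + y * B ^ (T - 2) = (x * B + y) * B ^ (T - 2)"
proof -
  have "T - 1 = Suc (T - 2)" using assms by arith
  then show ?thesis by (simp add: algebra_simps)
qed

lemma digits2_range:
  fixes x y B :: int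
  assumes "0 \<le> x" "x < B" "0 \<le> y" "y < B"
  shows "0 \<le> x * B + y" "x * B + y < B ^ 2"
  using append_digit_less[of x B 1 y] assms by (simp_all add: numeral_2_eq_2)

lemma digits3_range:
  fixes x y z B :: int
  assumes "0 \<le> x" "x < B" "0 \<le> y" "y < B" "0 \<le> z" "z < B"
  shows "0 \<le> (x * B + y) * B + z" "(x * B + y) * B + z < B ^ 3"
proof -
  have "x * B + y < B ^ 2" using digits2_range assms by simp
  then show "(x * B + y) * B + z < B ^ 3"
    using append_digit_less[of "x * B + y" B 2 z] assms by (simp add: numeral_3_eq_3)
  show "0 \<le> (x * B + y) * B + z" using assms by simp
qed

lemma leading_digit_separates:
  fixes x y v M X0 U :: int
  assumes "0 \<le> v" "v < M" "x * M \<le> X0" "U < (x + 1) * M" "y \<noteq> x"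
  shows "y * M + v < X0 \<or> U < y * M + v"
proof (cases "y < x")
  case True
  then have "(y + 1) * M \<le> x * M" using assms(1,2) by (intro mult_right_mono) auto
  then show ?thesis using assms(2,3) by (simp add: algebra_simps)
next
  case False
  then have "(x + 1) * M \<le> y * M" using assms(1,2,5) by (intro mult_right_mono) auto
  then show ?thesis using assms(1,4) by linarith
qed

lemma scaled_trichotomy:
  fixes N N0 M :: int
  assumes "0 < M"
  shows "N * M < N0 * M \<or> N = N0 \<or> N0 * M + M \<le> N * M"
proof -
  consider "N < N0" | "N = N0" | "N0 + 1 \<le> N" by linarith
  then show ?thesis
  proof cases
    case 3
    then have "(N0 + 1) * M \<le> N * M" using assms by (intro mult_right_mono) auto
    then show ?thesis by (simp add: algebra_simps)
  qed (use assms in auto)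
qed

lemma funpow_trajectory:
  assumes "\<And>k. k < n \<Longrightarrow> P (w k) \<and> G (w k) = w (Suc k)"
  shows "(G ^^ n) (w 0) = w n \<and> (\<forall>i<n. P ((G ^^ i) (w 0)))"
proof -
  have "(G ^^ k) (w 0) = w k" if "k \<le> n" for k
    using that by (induction k) (use assms in auto)
  then show ?thesis using assms by auto
qed

lemma greedy_step_eqI:
  assumes "finite Cs" "c0 \<in> Cs" "c0 \<le> W" "\<And>c. c \<in> Cs \<Longrightarrow> c \<le> W \<Longrightarrow> c \<le> c0"
  shows "greedy_step Cs W = W - c0"
proof -
  have "Max {c \<in> Cs. c \<le> W} = c0"
    using assms by (intro Max_eqI) auto
  then show ?thesis unfolding greedy_step_def by simp
qed

lemma bpow_nonneg: "0 \<le> B \<Longrightarrow> 0 \<le> bpow B T e"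
  unfolding bpow_def by simp

lemma bpow_mono: "1 \<le> B \<Longrightarrow> e \<le> e' \<Longrightarrow> bpow B T e \<le> bpow B T e'"
  unfolding bpow_def by (auto intro!: power_increasing mult_right_mono simp: nat_mono)

lemma bpow_level: "j \<le> T \<Longrightarrow> bpow B T (int T - int j) = B ^ ((T - j) * T)"
  unfolding bpow_def by (simp add: nat_diff_distrib)

lemma bpow_next_level: "j < T \<Longrightarrow> bpow B T (int T - int j) = B ^ T * bpow B T (int T - int j - 1)"
proof -
  assume "j < T"
  then have "(T - j) * T = T + (T - j - 1) * T"
    by (metis Suc_diff_Suc add.commute diff_Suc_1 mult_Suc)
  with \<open>j < T\<close> show ?thesis
    unfolding bpow_def by (simp add: nat_diff_distrib power_add)
qed

lemma bpow_next_level_less: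
  fixes B Z :: int
  assumes "2 \<le> B" "j \<le> T" "0 \<le> Z" "Z < B ^ T"
  shows "Z * bpow B T (int T - int j - 1) < bpow B T (int T - int j)"
proof (cases "j < T")
  case True
  have "0 < bpow B T (int T - int j - 1)"
    using True assms(1) unfolding bpow_def by simp
  then show ?thesis
    using assms(4) True by (simp add: bpow_next_level)
next
  case False
  then show ?thesis
    using assms(1,2) by (simp add: bpow_level bpow_def)
qed

text \<open>A head of this shape gives at level \<open>j\<close> a coin between \<open>(B^T - 1) B^((T-j-1)T)\<close> and
  \<open>B^T B^((T-j)T)\<close>, which keeps the coins of different levels apart.\<close>

definition head_shape :: "int \<Rightarrow> nat \<Rightarrow> int \<Rightarrow> int \<Rightarrow> bool" where
  "head_shape B T X Y \<longleftrightarrow> 1 \<le> X \<and> X < B ^ T \<and> 0 \<le> Y \<and> Y < B ^ T \<and> B ^ T - 1 \<le> X * B ^ T - Y"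

lemma head_shapeI_eq: "1 \<le> X \<Longrightarrow> X < B ^ T \<Longrightarrow> head_shape B T X X"
proof -
  assume "1 \<le> X" "X < B ^ T"
  then have "0 \<le> (X - 1) * (B ^ T - 1)" by simp
  with \<open>1 \<le> X\<close> \<open>X < B ^ T\<close> show ?thesis
    unfolding head_shape_def by (simp add: algebra_simps)
qed

lemma head_shapeI_ge2: "2 \<le> X \<Longrightarrow> X < B ^ T \<Longrightarrow> 0 \<le> Y \<Longrightarrow> Y < B ^ T \<Longrightarrow> head_shape B T X Y"
proof -
  assume "2 \<le> X" "X < B ^ T" "0 \<le> Y" "Y < B ^ T"
  moreover have "2 * B ^ T \<le> X * B ^ T"
    using \<open>2 \<le> X\<close> \<open>X < B ^ T\<close> by (intro mult_right_mono) auto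
  ultimately show ?thesis
    unfolding head_shape_def by linarith
qed

lemma coin_above_level:
  fixes B U Lo X Y :: int
  assumes B: "2 \<le> B" and lev: "1 \<le> j'" "j' < j" "j \<le> T"
    and sh: "head_shape B T X Y"
    and U: "0 \<le> U" "U + 2 \<le> B ^ T" and Lo: "0 \<le> Lo" "Lo < B ^ T"
  shows "U * bpow B T (int T - int j) + Lo * bpow B T (int T - int j - 1)
    < X * bpow B T (int T - int j') - Y * bpow B T (int T - int j' - 1)"
proof -
  define P where "P = bpow B T (int T - int j)"
  define Q' where "Q' = bpow B T (int T - int j' - 1)"
  have "0 \<le> Q'" unfolding Q'_def using B by (simp add: bpow_nonneg)
  have "U * P + Lo * bpow B T (int T - int j - 1) < U * P + P"
    unfolding P_def using bpow_next_level_less[OF B lev(3) Lo] by simp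
  also have "\<dots> = (U + 1) * P" by (simp add: algebra_simps)
  also have "\<dots> \<le> (B ^ T - 1) * P"
    using U B unfolding P_def by (intro mult_right_mono) (auto simp: bpow_nonneg)
  also have "\<dots> \<le> (B ^ T - 1) * Q'"
    unfolding P_def Q'_def using B lev by (intro mult_left_mono bpow_mono) auto
  also have "\<dots> \<le> (X * B ^ T - Y) * Q'"
    using sh \<open>0 \<le> Q'\<close> unfolding head_shape_def by (intro mult_right_mono) auto
  also have "\<dots> = X * bpow B T (int T - int j') - Y * Q'"
    unfolding Q'_def using lev by (simp add: bpow_next_level algebra_simps)
  finally show ?thesis unfolding P_def Q'_def .
qed

lemma coin_below_level:
  fixes B X Y X0 Y0 :: int
  assumes B: "2 \<le> B" and lev: "j < j'" "j' \<le> T"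
    and sh: "head_shape B T X Y" and sh0: "head_shape B T X0 Y0"
  shows "X * bpow B T (int T - int j') - Y * bpow B T (int T - int j' - 1)
    \<le> X0 * bpow B T (int T - int j) - Y0 * bpow B T (int T - int j - 1)"
proof -
  define P' where "P' = bpow B T (int T - int j - 1)"
  have "0 \<le> P'" unfolding P'_def using B by (simp add: bpow_nonneg)
  have "X * bpow B T (int T - int j') - Y * bpow B T (int T - int j' - 1) \<le> X * bpow B T (int T - int j')"
    using sh B unfolding head_shape_def by (simp add: bpow_nonneg)
  also have "\<dots> \<le> X * P'"
    unfolding P'_def using sh B lev unfolding head_shape_def by (intro mult_left_mono bpow_mono) auto
  also have "\<dots> \<le> (B ^ T - 1) * P'"
    using sh \<open>0 \<le> P'\<close> unfolding head_shape_def by (intro mult_right_mono) auto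
  also have "\<dots> \<le> (X0 * B ^ T - Y0) * P'"
    using sh0 \<open>0 \<le> P'\<close> unfolding head_shape_def by (intro mult_right_mono) auto
  also have "\<dots> = X0 * bpow B T (int T - int j) - Y0 * P'"
    unfolding P'_def using lev by (simp add: bpow_next_level algebra_simps)
  finally show ?thesis unfolding P'_def .
qed

lemma coin_same_level:
  fixes B U Lo X Y X0 Y0 :: int
  assumes B: "2 \<le> B" and j: "j \<le> T"
    and Y: "0 \<le> Y" "Y < B ^ T" and Y0: "0 \<le> Y0" "Y0 < B ^ T" and Lo: "0 \<le> Lo" "Lo < B ^ T"
    and cmp: "X < X0 \<or> (X = X0 \<and> Y = Y0) \<or> U + 2 \<le> X \<or> (U + 1 \<le> X \<and> Y + Lo < B ^ T)"
  defines "P \<equiv> bpow B T (int T - int j)" and "P' \<equiv> bpow B T (int T - int j - 1)"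
  shows "X * P - Y * P' \<le> X0 * P - Y0 * P' \<or> U * P + Lo * P' < X * P - Y * P'"
proof -
  have "0 \<le> P" "0 \<le> P'" unfolding P_def P'_def using B by (simp_all add: bpow_nonneg)
  have YP: "Y * P' < P" and Y0P: "Y0 * P' < P"
    using bpow_next_level_less[OF B j] Y Y0 unfolding P_def P'_def by auto
  have LoP: "0 \<le> Lo * P'" using Lo \<open>0 \<le> P'\<close> by simp
  from cmp consider "X + 1 \<le> X0" | "X = X0 \<and> Y = Y0" | "U + 2 \<le> X" | "U + 1 \<le> X \<and> Y + Lo < B ^ T"
    by linarith
  then show ?thesis
  proof cases
    case 1
    then have "(X + 1) * P \<le> X0 * P" using \<open>0 \<le> P\<close> by (intro mult_right_mono)
    moreover have "0 \<le> Y * P'" using Y \<open>0 \<le> P'\<close> by simp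
    ultimately show ?thesis using Y0P by (simp add: algebra_simps)
  next
    case 3
    then have "(U + 2) * P \<le> X * P" using \<open>0 \<le> P\<close> by (intro mult_right_mono)
    moreover have "Lo * P' < P"
      using bpow_next_level_less[OF B j Lo] unfolding P_def P'_def .
    ultimately show ?thesis using YP by (simp add: algebra_simps)
  next
    case 4
    then have "(U + 1) * P \<le> X * P" using \<open>0 \<le> P\<close> by (intro mult_right_mono) auto
    moreover have "(Y + Lo) * P' < P"
      using bpow_next_level_less[OF B j, of "Y + Lo"] 4 Y Lo unfolding P_def P'_def by simp
    ultimately show ?thesis by (simp add: algebra_simps)
  qed simp
qed

locale coin_setting =
  fixes \<delta> :: "'q::finite \<Rightarrow> 'a::finite \<Rightarrow> 'q \<times> 'a \<times> dir" and F :: "'q set"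
    and f :: "'q \<Rightarrow> nat" and g :: "'a \<Rightarrow> nat" and K :: nat and B :: int and T :: nat and endm :: 'a
  assumes tape_code_pos: "1 \<le> g a" and tape_code_le: "g a \<le> K" and state_code_pos: "1 \<le> f q"
    and base_large: "int (f q) * int K + int K + 2 \<le> B"
    and inj_f: "inj f" and inj_g: "inj g"
    and tape_long: "3 \<le> T"
begin

abbreviation "Cs \<equiv> coin_set \<delta> F f g K B T endm"
abbreviation "pc \<equiv> pcode f g K"

lemma tape_digit_bounds: "1 \<le> int (g a)" "int (g a) \<le> int K"
  using tape_code_pos tape_code_le by auto

lemma state_digit_bounds: "int K + 1 \<le> pc q a" "pc q a \<le> B - 2"
proof -
  have "1 * int K \<le> int (f q) * int K"
    using state_code_pos[of q] by (intro mult_right_mono) auto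
  then show "int K + 1 \<le> pc q a"
    using tape_digit_bounds[of a] unfolding pcode_def by linarith
  show "pc q a \<le> B - 2"
    using tape_digit_bounds[of a] base_large[of q] unfolding pcode_def by linarith
qed

lemma base_ge_2: "2 \<le> B"
  using state_digit_bounds[of undefined endm] by simp

lemma tape_digit_range: "0 \<le> int (g a)" "int (g a) < B"
  using tape_digit_bounds[of a] state_digit_bounds[of undefined a] by auto

lemma state_digit_range: "0 \<le> pc q a" "pc q a < B"
  using state_digit_bounds[of q a] by auto

lemma tape_less_state_digit: "int (g b) < pc q a"
  using tape_digit_bounds[of b] state_digit_bounds[of q a] by linarith

lemma pcode_inj: "pc q a = pc q' a' \<Longrightarrow> q = q' \<and> a = a'"
proof -
  assume "pc q a = pc q' a'"
  then have "int (f q) * int K + (int (g a) - 1) = int (f q') * int K + (int (g a') - 1)"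
    unfolding pcode_def by simp
  then have "int (f q) = int (f q') \<and> int (g a) - 1 = int (g a') - 1"
    using tape_digit_bounds[of a] tape_digit_bounds[of a'] by (intro low_digit_unique) auto
  then show ?thesis
    using inj_f inj_g by (auto dest: injD)
qed

definition "left_u p b = pc p endm * B ^ (T - 1) + int (g b) * B ^ (T - 2)"
definition "left_v p b = int (g endm) * B ^ (T - 1) + pc (fst (\<delta> p endm)) b * B ^ (T - 2)"

text \<open>Every coin is \<open>X * B^((T-j)T) - Y * B^((T-j-1)T)\<close> for a level \<open>j\<close> and a pair
  \<open>(X, Y)\<close> of the following kinds, called its head.\<close>

definition coin_heads :: "(int \<times> int) set" where
  "coin_heads =
     {(int (g a) * B ^ (T - i), int (g a) * B ^ (T - i)) | a i. 1 \<le> i \<and> i \<le> T}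
   \<union> {(trans_u f g K B T q am a ap i, trans_v \<delta> F f g K B T q am a ap i) | q am a ap i. 2 \<le> i \<and> i \<le> T - 1}
   \<union> {(left_u q ap, left_v q ap) | q ap. q \<notin> F}"

lemma head_cases:
  assumes "(X, Y) \<in> coin_heads"
  obtains (copy) a i where "1 \<le> i" "i \<le> T" "X = int (g a) * B ^ (T - i)" "Y = X"
  | (trans) q am a ap i where "2 \<le> i" "i \<le> T - 1"
      "X = trans_u f g K B T q am a ap i" "Y = trans_v \<delta> F f g K B T q am a ap i"
  | (left) q ap where "q \<notin> F" "X = left_u q ap" "Y = left_v q ap"
  using assms unfolding coin_heads_def by blast

lemma copy_head: "1 \<le> i \<Longrightarrow> i \<le> T \<Longrightarrow> (int (g a) * B ^ (T - i), int (g a) * B ^ (T - i)) \<in> coin_heads"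
  unfolding coin_heads_def by blast

lemma trans_head: "2 \<le> i \<Longrightarrow> i \<le> T - 1 \<Longrightarrow>
    (trans_u f g K B T q am a ap i, trans_v \<delta> F f g K B T q am a ap i) \<in> coin_heads"
  unfolding coin_heads_def by blast

lemma left_head: "q \<notin> F \<Longrightarrow> (left_u q ap, left_v q ap) \<in> coin_heads"
  unfolding coin_heads_def by blast

lemma coin_of_head:
  assumes "(X, Y) \<in> coin_heads" "1 \<le> j" "j \<le> T"
  shows "X * bpow B T (int T - int j) - Y * bpow B T (int T - int j - 1) \<in> Cs"
  using assms(1)
proof (cases rule: head_cases)
  case (copy a i)
  then show ?thesis
    using assms(2,3) unfolding coin_set_def copy_coins_def by (auto simp: right_diff_distrib)
next
  case (trans q am a ap i)
  then show ?thesis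
    using assms(2,3) unfolding coin_set_def transition_coins_def by blast
next
  case (left q ap)
  then show ?thesis
    using assms(2,3) unfolding coin_set_def leftend_coins_def left_u_def left_v_def by blast
qed

lemma coin_set_elim:
  assumes "c \<in> Cs"
  obtains X Y j where "(X, Y) \<in> coin_heads" "1 \<le> j" "j \<le> T"
    "c = X * bpow B T (int T - int j) - Y * bpow B T (int T - int j - 1)"
proof -
  from assms consider "c \<in> copy_coins g B T" | "c \<in> transition_coins \<delta> F f g K B T"
    | "c \<in> leftend_coins \<delta> F f g K B T endm"
    unfolding coin_set_def by blast
  then show thesis
  proof cases
    case 1
    then obtain a i j where "1 \<le> i" "i \<le> T" "1 \<le> j" "j \<le> T"
      "c = int (g a) * B ^ (T - i) * (bpow B T (int T - int j) - bpow B T (int T - int j - 1))"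
      unfolding copy_coins_def by blast
    then show thesis
      using that[OF copy_head] by (simp add: right_diff_distrib)
  next
    case 2
    then show thesis
      unfolding transition_coins_def using that[OF trans_head] by blast
  next
    case 3
    then show thesis
      unfolding leftend_coins_def using that[OF left_head, unfolded left_u_def left_v_def] by blast
  qed
qed

lemma finite_coin_heads: "finite coin_heads"
proof -
  let ?copy = "\<lambda>(a, i). (int (g a) * B ^ (T - i), int (g a) * B ^ (T - i))"
  let ?trans = "\<lambda>(q, am, a, ap, i). (trans_u f g K B T q am a ap i, trans_v \<delta> F f g K B T q am a ap i)"
  let ?left = "\<lambda>(q, ap). (left_u q ap, left_v q ap)"
  have "coin_heads \<subseteq> ?copy ` (UNIV \<times> {..T}) \<union> ?trans ` (UNIV \<times> UNIV \<times> UNIV \<times> UNIV \<times> {..T})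
      \<union> ?left ` UNIV"
  proof
    fix h assume "h \<in> coin_heads"
    then obtain X Y where h: "h = (X, Y)" "(X, Y) \<in> coin_heads" by (cases h) auto
    from h(2) show "h \<in> ?copy ` (UNIV \<times> {..T}) \<union> ?trans ` (UNIV \<times> UNIV \<times> UNIV \<times> UNIV \<times> {..T}) \<union> ?left ` UNIV"
    proof (cases rule: head_cases)
      case (copy a i)
      then show ?thesis unfolding h(1) by (intro UnI1 image_eqI[of _ _ "(a, i)"]) auto
    next
      case (trans q am a ap i)
      then show ?thesis unfolding h(1) by (intro UnI1 UnI2 image_eqI[of _ _ "(q, am, a, ap, i)"]) auto
    next
      case (left q ap)
      then show ?thesis unfolding h(1) by (intro UnI2 image_eqI[of _ _ "(q, ap)"]) auto
    qed
  qed
  then show ?thesis by (rule finite_subset) simp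
qed

lemma finite_coin_set: "finite Cs"
proof -
  have "Cs \<subseteq> (\<lambda>((X, Y), j). X * bpow B T (int T - int j) - Y * bpow B T (int T - int j - 1))
      ` (coin_heads \<times> {..T})"
    by (auto elim!: coin_set_elim intro!: image_eqI)
  then show ?thesis
    by (rule finite_subset) (simp add: finite_coin_heads)
qed

lemma trans_u_digits:
  "i < T \<Longrightarrow> trans_u f g K B T q am a ap i = ((int (g am) * B + pc q a) * B + int (g ap)) * B ^ (T - i - 1)"
  unfolding trans_u_def by (rule digits3_scale)

lemma trans_v_digits:
  assumes "i < T"
  obtains V where "trans_v \<delta> F f g K B T q am a ap i = V * B ^ (T - i - 1)" "0 \<le> V" "V < B ^ 3"
proof (cases "q \<in> F")
  case True
  then show thesis
    using that[of "(int (g am) * B + pc q a) * B + int (g ap)"]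
      digits3_range[OF tape_digit_range state_digit_range tape_digit_range]
    unfolding trans_v_def trans_u_def digits3_scale[OF assms] by simp
next
  case False
  obtain q' a' d where \<delta>: "\<delta> q a = (q', a', d)" by (metis prod.exhaust)
  show thesis
  proof (cases d)
    case L
    then show thesis
      using that[of "(pc q' am * B + int (g a')) * B + int (g ap)"]
        digits3_range[OF state_digit_range tape_digit_range tape_digit_range] False \<delta>
      unfolding trans_v_def digits3_scale[OF assms] by simp
  next
    case R
    then show thesis
      using that[of "(int (g am) * B + int (g a')) * B + pc q' ap"]
        digits3_range[OF tape_digit_range tape_digit_range state_digit_range] False \<delta>
      unfolding trans_v_def digits3_scale[OF assms] by simp
  qed
qed

lemma trans_head_span:
  assumes "2 \<le> i" "i \<le> T - 1"
  shows "B ^ (T - i + 1) \<le> trans_u f g K B T q am a ap i" "trans_u f g K B T q am a ap i < B ^ Suc (T - i + 1)"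
    "0 \<le> trans_v \<delta> F f g K B T q am a ap i" "trans_v \<delta> F f g K B T q am a ap i < B ^ Suc (T - i + 1)"
proof -
  define N where "N = (int (g am) * B + pc q a) * B + int (g ap)"
  have "i < T" using assms tape_long by arith
  obtain V where V: "trans_v \<delta> F f g K B T q am a ap i = V * B ^ (T - i - 1)" "0 \<le> V" "V < B ^ 3"
    by (rule trans_v_digits[OF \<open>i < T\<close>])
  have "B ^ 2 \<le> N" "N < B ^ 3"
    unfolding N_def
    using append_digit_ge[of B 1 "int (g am) * B + pc q a" "int (g ap)"]
      append_digit_ge[of B 0 "int (g am)" "pc q a"] tape_digit_bounds[of am]
      digits3_range[OF tape_digit_range state_digit_range tape_digit_range] tape_digit_range base_ge_2
      state_digit_range
    by (auto simp: numeral_2_eq_2)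
  moreover have "trans_u f g K B T q am a ap i = N * B ^ (T - i - 1)"
    using trans_u_digits[OF \<open>i < T\<close>] unfolding N_def by simp
  moreover have "T - i + 1 = 2 + (T - i - 1)" "Suc (T - i + 1) = 3 + (T - i - 1)"
    using \<open>i < T\<close> by arith+
  ultimately show "B ^ (T - i + 1) \<le> trans_u f g K B T q am a ap i"
    "trans_u f g K B T q am a ap i < B ^ Suc (T - i + 1)"
    "0 \<le> trans_v \<delta> F f g K B T q am a ap i" "trans_v \<delta> F f g K B T q am a ap i < B ^ Suc (T - i + 1)"
    using scaled_ge[of B 2 N "T - i - 1"] scaled_less[of B N 3 "T - i - 1"]
      scaled_less[of B V 3 "T - i - 1"] V base_ge_2 by simp_all
qed

lemma left_u_digits: "left_u p b = (pc p endm * B + int (g b)) * B ^ (T - 2)"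
  unfolding left_u_def using tape_long by (intro digits2_scale) simp

lemma left_v_digits: "left_v p b = (int (g endm) * B + pc (fst (\<delta> p endm)) b) * B ^ (T - 2)"
  unfolding left_v_def using tape_long by (intro digits2_scale) simp

lemma state_digit_le_left_u: "pc p endm * B ^ (T - 1) \<le> left_u p b"
  unfolding left_u_def using tape_digit_range[of b] base_ge_2 by simp

lemma left_head_span: "B ^ (T - 1) \<le> left_u p b" "left_u p b < B ^ T" "0 \<le> left_v p b" "left_v p b < B ^ T"
proof -
  define N where "N = pc p endm * B + int (g b)"
  define V where "V = int (g endm) * B + pc (fst (\<delta> p endm)) b"
  have "B ^ 1 \<le> N" "N < B ^ 2" "0 \<le> V" "V < B ^ 2"
    unfolding N_def V_def
    using append_digit_ge[of B 0 "pc p endm" "int (g b)"] state_digit_bounds[of p endm]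
      digits2_range[OF state_digit_range tape_digit_range] digits2_range[OF tape_digit_range state_digit_range]
      tape_digit_range base_ge_2
    by auto
  moreover have "T - 1 = 1 + (T - 2)" "T = 2 + (T - 2)"
    using tape_long by arith+
  ultimately show "B ^ (T - 1) \<le> left_u p b" "left_u p b < B ^ T" "0 \<le> left_v p b" "left_v p b < B ^ T"
    unfolding left_u_digits left_v_digits N_def[symmetric] V_def[symmetric]
    using scaled_ge[of B 1 N "T - 2"] scaled_less[of B N 2 "T - 2"] scaled_less[of B V 2 "T - 2"] base_ge_2
    by simp_all
qed

lemma head_span_cases:
  assumes "(X, Y) \<in> coin_heads"
  obtains (copy) a i where "1 \<le> i" "i \<le> T" "X = int (g a) * B ^ (T - i)" "Y = X"
      "B ^ (T - i) \<le> X" "X < B ^ Suc (T - i)"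
  | (trans) q am a ap i where "2 \<le> i" "i \<le> T - 1"
      "X = trans_u f g K B T q am a ap i" "Y = trans_v \<delta> F f g K B T q am a ap i"
      "B ^ (T - i + 1) \<le> X" "X < B ^ Suc (T - i + 1)" "0 \<le> Y" "Y < B ^ Suc (T - i + 1)"
  | (left) q ap where "q \<notin> F" "X = left_u q ap" "Y = left_v q ap"
      "B ^ (T - 1) \<le> X" "X < B ^ T" "0 \<le> Y" "Y < B ^ T"
  using assms
proof (cases rule: head_cases)
  case (copy a i)
  then show thesis
    using that(1) scaled_ge[of B 0 "int (g a)" "T - i"] scaled_less[of B "int (g a)" 1 "T - i"]
      tape_digit_bounds[of a] tape_digit_range[of a] base_ge_2
    by simp
next
  case (trans q am a ap i)
  show thesis
    by (rule that(2)[OF trans]) (use trans(3,4) trans_head_span[OF trans(1,2)] in simp_all)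
next
  case (left q ap)
  show thesis
    by (rule that(3)[OF left]) (use left(2,3) left_head_span in simp_all)
qed

lemma head_shape_of_head:
  assumes "(X, Y) \<in> coin_heads"
  shows "head_shape B T X Y"
  using assms
proof (cases rule: head_span_cases)
  case (copy a i)
  have "1 \<le> X" using order_trans[OF one_le_power copy(5)] base_ge_2 by simp
  moreover have "B ^ Suc (T - i) \<le> B ^ T"
    using copy(1) tape_long base_ge_2 by (intro power_increasing) auto
  with copy(6) have "X < B ^ T" by (rule less_le_trans)
  ultimately show ?thesis unfolding copy(4) by (rule head_shapeI_eq)
next
  case (trans q am a ap i)
  have "B ^ 1 \<le> B ^ (T - i + 1)" "B ^ Suc (T - i + 1) \<le> B ^ T"
    using trans(1,2) base_ge_2 by (intro power_increasing; auto)+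
  then have "2 \<le> X" "X < B ^ T" "Y < B ^ T"
    using trans(5,6,8) base_ge_2 unfolding power_one_right by linarith+
  with trans(7) show ?thesis by (intro head_shapeI_ge2)
next
  case (left q ap)
  have "B ^ 1 \<le> B ^ (T - 1)"
    using tape_long base_ge_2 by (intro power_increasing) auto
  then have "2 \<le> X" using left(4) base_ge_2 by simp
  with left(5-7) show ?thesis by (intro head_shapeI_ge2)
qed

lemma head_tail_below:
  assumes "(X, Y) \<in> coin_heads" "X < B ^ m"
  shows "Y < B ^ m"
  using assms(1)
proof (cases rule: head_span_cases)
  case (trans q am a ap i)
  then have "Suc (T - i + 1) \<le> m"
    using pow_exp_less[of B "T - i + 1" X m] assms(2) base_ge_2 by simp
  then have "B ^ Suc (T - i + 1) \<le> B ^ m"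
    using base_ge_2 by (intro power_increasing) auto
  with trans(8) show ?thesis by (rule less_le_trans)
next
  case (left q ap)
  then have "T - 1 < m"
    using pow_exp_less[of B "T - 1" X m] assms(2) base_ge_2 by simp
  then have "B ^ T \<le> B ^ m"
    using tape_long base_ge_2 by (intro power_increasing) auto
  with left(7) show ?thesis by (rule less_le_trans)
qed (use assms in simp)

lemma head_at_position:
  assumes "(X, Y) \<in> coin_heads" "1 \<le> a" "a \<le> T" "B ^ (T - a) \<le> X" "X < B ^ Suc (T - a)"
  obtains (copy) b where "X = int (g b) * B ^ (T - a)" "Y = X"
  | (trans) q am c ap where "a + 2 \<le> T"
      "X = trans_u f g K B T q am c ap (Suc a)" "Y = trans_v \<delta> F f g K B T q am c ap (Suc a)"
  | (left) q ap where "a = 1" "q \<notin> F" "X = left_u q ap" "Y = left_v q ap"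
  using assms(1)
proof (cases rule: head_span_cases)
  case (copy b i)
  then have "T - i = T - a"
    using pow_span_unique[of B "T - i" X "T - a"] assms base_ge_2 by simp
  with copy(3,4) show thesis by (intro that(1)[of b]) simp_all
next
  case (trans q am c ap i)
  then have "T - i + 1 = T - a"
    using pow_span_unique[of B "T - i + 1" X "T - a"] assms base_ge_2 by simp
  then have "i = Suc a" "a + 2 \<le> T" using trans(1,2) assms(2,3) by arith+
  with trans(3,4) show thesis by (intro that(2)) simp_all
next
  case (left q ap)
  then have "T - 1 = T - a"
    using pow_span_unique[of B "T - 1" X "T - a"] assms base_ge_2 by simp
  then have "a = 1" using assms tape_long by arith
  with left(1-3) show thesis by (intro that(3))
qed

lemma trans_u_compare:
  assumes "i < T"
  shows "trans_u f g K B T q am a ap i < trans_u f g K B T q' am' a' ap' i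
    \<or> (q = q' \<and> am = am' \<and> a = a' \<and> ap = ap')
    \<or> trans_u f g K B T q' am' a' ap' i + B ^ (T - i - 1) \<le> trans_u f g K B T q am a ap i"
proof -
  define N where "N = (int (g am) * B + pc q a) * B + int (g ap)"
  define N' where "N' = (int (g am') * B + pc q' a') * B + int (g ap')"
  have "N = N' \<Longrightarrow> q = q' \<and> am = am' \<and> a = a' \<and> ap = ap'"
  proof -
    assume "N = N'"
    then have "int (g am) * B + pc q a = int (g am') * B + pc q' a'" "int (g ap) = int (g ap')"
      unfolding N_def N'_def using low_digit_unique tape_digit_range by blast+
    then have "int (g am) = int (g am')" "pc q a = pc q' a'" "int (g ap) = int (g ap')"
      using low_digit_unique state_digit_range by blast+
    then show ?thesis using pcode_inj inj_g by (auto dest: injD)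
  qed
  then show ?thesis
    using scaled_trichotomy[of "B ^ (T - i - 1)" N N'] base_ge_2
    unfolding trans_u_digits[OF assms] N_def[symmetric] N'_def[symmetric] by auto
qed

lemma trans_u_leading_digit:
  assumes "a + 2 \<le> T"
  obtains v where "trans_u f g K B T q am c ap (Suc a) = int (g am) * B ^ (T - a) + v"
    "pc q c * B ^ (T - Suc a) \<le> v" "0 \<le> v" "v < B ^ (T - a)"
proof -
  define v where "v = (pc q c * B + int (g ap)) * B ^ (T - Suc (Suc a))"
  have pow: "T - Suc a + 1 = T - a" "T - Suc a - 1 = T - Suc (Suc a)"
    "B ^ (T - a) = B ^ 2 * B ^ (T - Suc (Suc a))" "B ^ (T - Suc a) = B * B ^ (T - Suc (Suc a))"
    using assms by (simp_all flip: power_add power_Suc add: Suc_diff_Suc numeral_2_eq_2)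
  show thesis
  proof (rule that)
    show "trans_u f g K B T q am c ap (Suc a) = int (g am) * B ^ (T - a) + v"
      unfolding trans_u_def v_def pow by (simp add: algebra_simps)
    show "pc q c * B ^ (T - Suc a) \<le> v"
      unfolding v_def pow using tape_digit_range base_ge_2 by (simp add: algebra_simps)
    show "0 \<le> v" "v < B ^ (T - a)"
      unfolding v_def pow using digits2_range[OF state_digit_range tape_digit_range] base_ge_2 by simp_all
  qed
qed

lemma left_u_compare:
  "left_u p b < left_u p' b' \<or> (p = p' \<and> b = b') \<or> left_u p' b' + B ^ (T - 2) \<le> left_u p b"
proof -
  have "pc p endm * B + int (g b) = pc p' endm * B + int (g b') \<Longrightarrow> p = p' \<and> b = b'"
  proof -
    assume "pc p endm * B + int (g b) = pc p' endm * B + int (g b')"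
    then have "pc p endm = pc p' endm" "int (g b) = int (g b')"
      using low_digit_unique tape_digit_range by blast+
    then show ?thesis using pcode_inj inj_g by (auto dest: injD)
  qed
  then show ?thesis
    using scaled_trichotomy[of "B ^ (T - 2)" "pc p endm * B + int (g b)" "pc p' endm * B + int (g b')"] base_ge_2
    unfolding left_u_digits by auto
qed

lemma head_separation:
  assumes "(X, Y) \<in> coin_heads" "X < X0 \<or> (X = X0 \<and> Y = Y0) \<or> U < X"
    and "U + 2 \<le> B ^ m" "Lo + B ^ m \<le> B ^ T"
  shows "X < X0 \<or> (X = X0 \<and> Y = Y0) \<or> U + 2 \<le> X \<or> (U + 1 \<le> X \<and> Y + Lo < B ^ T)"
proof (cases "X < B ^ m")
  case True
  then show ?thesis using assms(2,4) head_tail_below[OF assms(1) True] by auto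
next
  case False
  then show ?thesis using assms(2,3) by auto
qed

lemma greedy_step_head:
  assumes j: "1 \<le> j" "j \<le> T" and head0: "(X0, Y0) \<in> coin_heads"
    and U: "0 \<le> U" "U + 2 \<le> B ^ m" "m \<le> T" and Lo: "0 \<le> Lo" "Lo + B ^ m \<le> B ^ T"
    and "X0 \<le> U"
    and sep: "\<And>X Y. (X, Y) \<in> coin_heads \<Longrightarrow> X < X0 \<or> (X = X0 \<and> Y = Y0) \<or> U < X"
  defines "W \<equiv> U * bpow B T (int T - int j) + Lo * bpow B T (int T - int j - 1)"
    and "c0 \<equiv> X0 * bpow B T (int T - int j) - Y0 * bpow B T (int T - int j - 1)"
  shows "c0 \<in> Cs" "c0 \<le> W" "greedy_step Cs W = W - c0"
proof -
  have sh0: "head_shape B T X0 Y0" using head0 by (rule head_shape_of_head)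
  have "B ^ m \<le> B ^ T" "1 \<le> B ^ m"
    using U(3) base_ge_2 by (auto intro: power_increasing)
  then have U': "U + 2 \<le> B ^ T" and Lo': "Lo < B ^ T" using U Lo by linarith+
  show c0: "c0 \<in> Cs" unfolding c0_def using head0 j by (rule coin_of_head)
  have "W - c0 = (U - X0) * bpow B T (int T - int j) + (Lo + Y0) * bpow B T (int T - int j - 1)"
    unfolding W_def c0_def by (simp add: algebra_simps)
  moreover have "0 \<le> (U - X0) * bpow B T (int T - int j) + (Lo + Y0) * bpow B T (int T - int j - 1)"
    using \<open>X0 \<le> U\<close> Lo sh0 base_ge_2 unfolding head_shape_def by (simp add: bpow_nonneg)
  ultimately show c0W: "c0 \<le> W" by simp
  show "greedy_step Cs W = W - c0"
  proof (rule greedy_step_eqI[OF finite_coin_set c0 c0W])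
    fix c assume "c \<in> Cs" "c \<le> W"
    then obtain X Y j' where head: "(X, Y) \<in> coin_heads" and j': "1 \<le> j'" "j' \<le> T"
      and c: "c = X * bpow B T (int T - int j') - Y * bpow B T (int T - int j' - 1)"
      by (elim coin_set_elim)
    have sh: "head_shape B T X Y" using head by (rule head_shape_of_head)
    consider "j' < j" | "j < j'" | "j' = j" by linarith
    then show "c \<le> c0"
    proof cases
      case 1
      with coin_above_level[OF base_ge_2 j'(1) 1 j(2) sh U(1) U' Lo(1) Lo'] \<open>c \<le> W\<close>
      show ?thesis unfolding c W_def by simp
    next
      case 2
      from coin_below_level[OF base_ge_2 2 j'(2) sh sh0] show ?thesis unfolding c c0_def .
    next
      case 3
      have cmp: "X < X0 \<or> (X = X0 \<and> Y = Y0) \<or> U + 2 \<le> X \<or> (U + 1 \<le> X \<and> Y + Lo < B ^ T)"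
        using head_separation[OF head sep[OF head] U(2) Lo(2)] .
      have "0 \<le> Y" "Y < B ^ T" "0 \<le> Y0" "Y0 < B ^ T"
        using sh sh0 unfolding head_shape_def by auto
      from coin_same_level[OF base_ge_2 j(2) this Lo(1) Lo' cmp] \<open>c \<le> W\<close>
      show ?thesis unfolding c c0_def W_def 3 by auto
    qed
  qed
qed

definition digit :: "('q, 'a) config \<Rightarrow> nat \<Rightarrow> int" where
  "digit c i = (case c of (q, h, tp) \<Rightarrow> if i = h then pc q (tp i) else int (g (tp i)))"

lemma digit_bounds: "1 \<le> digit c i" "digit c i \<le> B - 2"
proof -
  have "1 \<le> int (g a)" "int (g a) \<le> B - 2" "1 \<le> pc p a" "pc p a \<le> B - 2" for p a
    using tape_digit_bounds[of a] state_digit_bounds[of p a] state_digit_bounds[of undefined a] by linarith+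
  then show "1 \<le> digit c i" "digit c i \<le> B - 2"
    unfolding digit_def by (auto split: prod.splits)
qed

lemma enc_eq_digits: "enc f g K B T c = (\<Sum>i\<in>{0<..T}. digit c i * B ^ (T - i))"
  unfolding enc_def digit_def atLeastSucAtMost_greaterThanAtMost[symmetric]
  by (auto split: prod.splits intro!: sum.cong)

end

locale config_step = coin_setting \<delta> F f g K B T endm
  for \<delta> :: "'q::finite \<Rightarrow> 'a::finite \<Rightarrow> 'q \<times> 'a \<times> dir" and F f g K B T endm +
  fixes q :: 'q and h :: nat and tp :: "nat \<Rightarrow> 'a" and j :: nat
  assumes endmarker: "p \<notin> F \<Longrightarrow> \<exists>p'. \<delta> p endm = (p', endm, R)"
    and head_pos: "1 \<le> h" "h < T" and endmarker_cell: "tp 1 = endm"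
    and halting_head: "q \<in> F \<Longrightarrow> h = 2"
    and level: "1 \<le> j" "j \<le> T"
begin

definition "d i = digit (q, h, tp) i"
definition "e i = digit (tm_step \<delta> F (q, h, tp)) i"

text \<open>During the \<open>j\<close>-th stage the remaining amount is \<open>Wr r\<close> once the first \<open>r\<close> digit
  positions have been rewritten: the digits of the successor configuration at positions \<open>\<le> r\<close>
  sit one level lower, those of the current configuration at positions \<open>> r\<close> are untouched.\<close>

definition "U r = (\<Sum>i\<in>{r<..T}. d i * B ^ (T - i))"
definition "Lo r = (\<Sum>i\<in>{0<..r}. e i * B ^ (T - i))"
definition "Wr r = U r * bpow B T (int T - int j) + Lo r * bpow B T (int T - int j - 1)"

lemma d_tape: "i \<noteq> h \<Longrightarrow> d i = int (g (tp i))"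
  unfolding d_def digit_def by simp

lemma d_head: "d h = pc q (tp h)"
  unfolding d_def digit_def by simp

lemma U_Suc: "r < T \<Longrightarrow> U r = d (Suc r) * B ^ (T - Suc r) + U (Suc r)"
proof -
  assume "r < T"
  then have "{r<..T} = insert (Suc r) {Suc r<..T}" by auto
  then show ?thesis unfolding U_def by simp
qed

lemma Lo_Suc: "Lo (Suc r) = Lo r + e (Suc r) * B ^ (T - Suc r)"
proof -
  have "{0<..Suc r} = insert (Suc r) {0<..r}" by auto
  then show ?thesis unfolding Lo_def by (simp add: add.commute)
qed

lemma U_bounds: "r \<le> T \<Longrightarrow> 0 \<le> U r \<and> U r + 1 \<le> B ^ (T - r) \<and> (r < T \<longrightarrow> U r + 2 \<le> B ^ (T - r))"
proof (induction "T - r" arbitrary: r)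
  case 0
  then show ?case unfolding U_def by simp
next
  case (Suc n)
  then have r: "r < T" by simp
  have IH: "0 \<le> U (Suc r)" "U (Suc r) + 1 \<le> B ^ (T - Suc r)"
    using Suc(1)[of "Suc r"] Suc(2) r by auto
  have "B ^ (T - r) = B * B ^ (T - Suc r)"
    using r by (metis Suc_diff_Suc power_Suc)
  moreover have "d (Suc r) * B ^ (T - Suc r) \<le> (B - 2) * B ^ (T - Suc r)" "1 \<le> B ^ (T - Suc r)"
    using digit_bounds base_ge_2 unfolding d_def by (auto intro: mult_right_mono)
  moreover have "0 \<le> d (Suc r) * B ^ (T - Suc r)"
    using digit_bounds(1)[of "(q, h, tp)" "Suc r"] base_ge_2 unfolding d_def by simp
  ultimately show ?case using U_Suc[OF r] IH r by (simp add: algebra_simps)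
qed

lemma Lo_bounds: "r \<le> T \<Longrightarrow> 0 \<le> Lo r \<and> Lo r + B ^ (T - r) \<le> B ^ T"
proof (induction r)
  case 0
  then show ?case unfolding Lo_def by simp
next
  case (Suc r)
  then have r: "r < T" by simp
  have "B ^ (T - r) = B * B ^ (T - Suc r)"
    using r by (metis Suc_diff_Suc power_Suc)
  moreover have "e (Suc r) * B ^ (T - Suc r) \<le> (B - 2) * B ^ (T - Suc r)" "0 \<le> B ^ (T - Suc r)"
    using digit_bounds base_ge_2 unfolding e_def by (auto intro: mult_right_mono)
  moreover have "0 \<le> e (Suc r) * B ^ (T - Suc r)"
    using digit_bounds(1)[of "tm_step \<delta> F (q, h, tp)" "Suc r"] base_ge_2 unfolding e_def
    by (intro mult_nonneg_nonneg) simp_all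
  ultimately show ?case using Lo_Suc[of r] Suc r by (simp add: algebra_simps)
qed

lemma U_antimono: "r \<le> s \<Longrightarrow> U s \<le> U r"
  unfolding U_def
proof (rule sum_mono2)
  show "0 \<le> d i * B ^ (T - i)" for i
    using digit_bounds(1)[of "(q, h, tp)" i] base_ge_2 unfolding d_def by simp
qed auto

lemma U_less_next_digit: "r < T \<Longrightarrow> U r < (d (Suc r) + 1) * B ^ (T - Suc r)"
  using U_Suc[of r] U_bounds[of "Suc r"] by (simp add: algebra_simps)

lemma Wr_start: "Wr 0 = enc f g K B T (q, h, tp) * bpow B T (int T - int j)"
  unfolding Wr_def U_def Lo_def enc_eq_digits d_def by simp

lemma Wr_end: "Wr T = enc f g K B T (tm_step \<delta> F (q, h, tp)) * bpow B T (int T - int j - 1)"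
  unfolding Wr_def U_def Lo_def enc_eq_digits e_def by simp

text \<open>Only heads whose leading digit sits at position \<open>Suc r\<close> have to be inspected: the others
  are smaller than the candidate or larger than the whole remaining amount.\<close>

lemma window_step:
  assumes "r < s" "s \<le> T" and head: "(U r - U s, Lo s - Lo r) \<in> coin_heads"
    and sep: "\<And>X Y. (X, Y) \<in> coin_heads \<Longrightarrow> B ^ (T - Suc r) \<le> X \<Longrightarrow> X < B ^ Suc (T - Suc r) \<Longrightarrow>
      X < U r - U s \<or> (X = U r - U s \<and> Y = Lo s - Lo r) \<or> U r < X"
  shows "\<exists>c\<in>Cs. c \<le> Wr r \<and> greedy_step Cs (Wr r) = Wr s"
proof -
  have r: "r < T" using assms by simp
  have U: "0 \<le> U r" "U r + 2 \<le> B ^ (T - r)" and Lo: "0 \<le> Lo r" "Lo r + B ^ (T - r) \<le> B ^ T"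
    using U_bounds[of r] Lo_bounds[of r] r by auto
  have "U s \<le> U (Suc r)" "0 \<le> U s" using U_antimono[of "Suc r" s] U_bounds[of s] assms by auto
  moreover have "B ^ (T - Suc r) \<le> d (Suc r) * B ^ (T - Suc r)"
    using digit_bounds(1) base_ge_2 unfolding d_def by simp
  ultimately have X0: "B ^ (T - Suc r) \<le> U r - U s" "U r - U s \<le> U r"
    using U_Suc[OF r] by linarith+
  have pow: "B ^ Suc (T - Suc r) = B ^ (T - r)" using r by (simp add: Suc_diff_Suc)
  have "X < U r - U s \<or> (X = U r - U s \<and> Y = Lo s - Lo r) \<or> U r < X"
    if "(X, Y) \<in> coin_heads" for X Y
    using sep[OF that] X0(1) U(2) pow by fastforce
  note pick = greedy_step_head[OF level head U(1,2) diff_le_self Lo X0(2) this]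
  define c0 where "c0 = (U r - U s) * bpow B T (int T - int j) - (Lo s - Lo r) * bpow B T (int T - int j - 1)"
  have "Wr r - c0 = Wr s" unfolding Wr_def c0_def by (simp add: algebra_simps)
  with pick show ?thesis unfolding Wr_def[of r] c0_def[symmetric] by auto
qed

definition "wlo = (if h = 1 then 1 else h - 1)"
definition "whi = (if h = 1 then 2 else h + 1)"

lemma e_outside_window:
  assumes "i < wlo \<or> whi < i"
  shows "e i = d i"
proof (cases "q \<in> F")
  case True
  then show ?thesis unfolding e_def d_def tm_step_def by simp
next
  case False
  obtain q' a' m where \<delta>: "\<delta> q (tp h) = (q', a', m)" by (metis prod.exhaust)
  have "m = R" if "h = 1"
    using endmarker[OF False] \<delta> that endmarker_cell by auto
  then have "i \<noteq> h" "i \<noteq> (if m = L then h - 1 else h + 1)"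
    using assms head_pos unfolding wlo_def whi_def by (auto split: if_splits)
  then show ?thesis
    unfolding e_def d_def tm_step_def digit_def using False \<delta> by simp
qed

lemma d_tape_outside_window: "i < wlo \<or> whi < i \<Longrightarrow> d i = int (g (tp i))"
  using head_pos by (intro d_tape) (auto simp: wlo_def whi_def split: if_splits)

lemma U_less_state_digit:
  assumes "r < T" "Suc r \<noteq> h"
  shows "U r < pc p a * B ^ (T - Suc r)"
proof -
  have "(d (Suc r) + 1) * B ^ (T - Suc r) \<le> pc p a * B ^ (T - Suc r)"
    using d_tape[OF assms(2)] tape_less_state_digit[of "tp (Suc r)" p a] base_ge_2
    by (intro mult_right_mono) auto
  with U_less_next_digit[OF assms(1)] show ?thesis by linarith
qed

lemma copy_candidate_separates:
  assumes r: "r < T" "Suc r < wlo \<or> whi < Suc r" and head: "(X, Y) \<in> coin_heads"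
    and pos: "B ^ (T - Suc r) \<le> X" "X < B ^ Suc (T - Suc r)"
  defines "M \<equiv> B ^ (T - Suc r)"
  shows "X < d (Suc r) * M \<or> (X = d (Suc r) * M \<and> Y = X) \<or> U r < X"
proof -
  have Ur: "U r < (d (Suc r) + 1) * M"
    unfolding M_def using U_less_next_digit[OF r(1)] .
  have not_head: "Suc r \<noteq> h" "Suc (Suc r) \<noteq> h"
    using r(2) head_pos unfolding wlo_def whi_def by (auto split: if_splits)
  have a: "1 \<le> Suc r" "Suc r \<le> T" using r(1) by auto
  from head a pos show ?thesis
  proof (cases rule: head_at_position)
    case (copy b)
    then show ?thesis
      using leading_digit_separates[of 0 M "d (Suc r)" "d (Suc r) * M" "U r" "int (g b)"] Ur base_ge_2
      unfolding M_def by fastforce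
  next
    case (trans p am c ap)
    \<comment> \<open>even with the same leading digit, the head has a state digit at \<open>r + 2\<close>, where \<open>C\<close> has
      a tape digit\<close>
    obtain v where X: "X = int (g am) * M + v"
      and v: "pc p c * B ^ (T - Suc (Suc r)) \<le> v" "0 \<le> v" "v < M"
      using trans_u_leading_digit[OF trans(1)] trans(2) unfolding M_def by metis
    then show ?thesis
      using leading_digit_separates[of v M "d (Suc r)" "d (Suc r) * M" "U r" "int (g am)"] Ur v
        U_less_state_digit[of "Suc r" p c] U_Suc[OF r(1)] not_head trans(1) X
      unfolding M_def by fastforce
  next
    case (left p ap)
    then have "U r < pc p endm * B ^ (T - 1)"
      using U_less_state_digit[OF r(1) not_head(1)] by simp
    then show ?thesis
      using left(3) state_digit_le_left_u[of p ap] by linarith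
  qed
qed

lemma copy_step:
  assumes "r < T" "Suc r < wlo \<or> whi < Suc r"
  shows "\<exists>c\<in>Cs. c \<le> Wr r \<and> greedy_step Cs (Wr r) = Wr (Suc r)"
proof (rule window_step)
  have "U r - U (Suc r) = int (g (tp (Suc r))) * B ^ (T - Suc r)"
    "Lo (Suc r) - Lo r = int (g (tp (Suc r))) * B ^ (T - Suc r)"
    using U_Suc[OF assms(1)] Lo_Suc[of r] e_outside_window[OF assms(2)] d_tape_outside_window[OF assms(2)]
    by simp_all
  moreover show "(U r - U (Suc r), Lo (Suc r) - Lo r) \<in> coin_heads"
    unfolding calculation using assms(1) by (intro copy_head) auto
  ultimately show "X < U r - U (Suc r) \<or> (X = U r - U (Suc r) \<and> Y = Lo (Suc r) - Lo r) \<or> U r < X"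
    if "(X, Y) \<in> coin_heads" "B ^ (T - Suc r) \<le> X" "X < B ^ Suc (T - Suc r)" for X Y
    using copy_candidate_separates[OF assms that] d_tape_outside_window[OF assms(2)] by auto
qed (use assms in auto)

lemma trans_v_successor_digits:
  assumes "2 \<le> h"
  shows "trans_v \<delta> F f g K B T q (tp (h - 1)) (tp h) (tp (Suc h)) h
    = e (h - 1) * B ^ (T - (h - 1)) + e h * B ^ (T - h) + e (Suc h) * B ^ (T - Suc h)"
proof -
  have pos: "T - h + 1 = T - (h - 1)" "T - h - 1 = T - Suc h" "h - 1 \<noteq> h" "Suc h \<noteq> h" "h - 1 \<noteq> Suc h"
    using assms head_pos by arith+
  show ?thesis
  proof (cases "q \<in> F")
    case True
    then have "e = d" unfolding e_def d_def tm_step_def by (simp add: fun_eq_iff)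
    with True show ?thesis
      unfolding trans_v_def trans_u_def pos(1,2) using d_tape[OF pos(3)] d_tape[OF pos(4)] d_head by simp
  next
    case False
    obtain q' a' m where \<delta>: "\<delta> q (tp h) = (q', a', m)" by (metis prod.exhaust)
    then have succ: "tm_step \<delta> F (q, h, tp) = (q', if m = L then h - 1 else h + 1, tp(h := a'))"
      unfolding tm_step_def using False by simp
    show ?thesis
      using False \<delta> pos unfolding trans_v_def e_def succ digit_def by (cases m) auto
  qed
qed

lemma trans_u_current_digits:
  assumes "2 \<le> h"
  shows "trans_u f g K B T q (tp (h - 1)) (tp h) (tp (Suc h)) h
    = d (h - 1) * B ^ (T - (h - 1)) + d h * B ^ (T - h) + d (Suc h) * B ^ (T - Suc h)"
proof -
  have "T - h + 1 = T - (h - 1)" "T - h - 1 = T - Suc h" using assms head_pos by arith+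
  then show ?thesis
    unfolding trans_u_def using d_tape[of "h - 1"] d_tape[of "Suc h"] d_head assms by simp
qed

lemma U_trans_window:
  assumes "2 \<le> h"
  shows "U (h - 2) = trans_u f g K B T q (tp (h - 1)) (tp h) (tp (Suc h)) h + U (Suc h)"
proof -
  have "h - 2 < T" "Suc (h - 2) = h - 1" "Suc (h - 1) = h" "h - 1 < T" using assms head_pos by arith+
  then show ?thesis
    using U_Suc[of "h - 2"] U_Suc[of "h - 1"] U_Suc[of h] head_pos trans_u_current_digits[OF assms]
    by simp
qed

lemma Lo_trans_window:
  assumes "2 \<le> h"
  shows "Lo (Suc h) = Lo (h - 2) + trans_v \<delta> F f g K B T q (tp (h - 1)) (tp h) (tp (Suc h)) h"
proof -
  have "Suc (h - 2) = h - 1" "Suc (h - 1) = h" using assms by arith+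
  then show ?thesis
    using Lo_Suc[of "h - 2"] Lo_Suc[of "h - 1"] Lo_Suc[of h] trans_v_successor_digits[OF assms]
    by simp
qed

lemma trans_candidate_separates:
  assumes h: "2 \<le> h" and head: "(X, Y) \<in> coin_heads"
    and pos: "B ^ (T - (h - 1)) \<le> X" "X < B ^ Suc (T - (h - 1))"
  defines "X0 \<equiv> trans_u f g K B T q (tp (h - 1)) (tp h) (tp (Suc h)) h"
    and "Y0 \<equiv> trans_v \<delta> F f g K B T q (tp (h - 1)) (tp h) (tp (Suc h)) h"
  shows "X < X0 \<or> (X = X0 \<and> Y = Y0) \<or> U (h - 2) < X"
proof -
  define M where "M = B ^ (T - Suc h)"
  have M: "0 < M" "U (Suc h) + 1 \<le> M" unfolding M_def using base_ge_2 U_bounds[of "Suc h"] head_pos by auto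
  have a: "1 \<le> h - 1" "h - 1 \<le> T" and r: "h - 2 < T" "Suc (h - 2) = h - 1" using h head_pos by arith+
  have U: "U (h - 2) = X0 + U (Suc h)" unfolding X0_def by (rule U_trans_window[OF h])
  have X0: "X0 = d (h - 1) * B ^ (T - (h - 1)) + d h * B ^ (T - h) + d (Suc h) * B ^ (T - Suc h)"
    unfolding X0_def by (rule trans_u_current_digits[OF h])
  from head a pos show ?thesis
  proof (cases rule: head_at_position)
    case (copy b)
    have "0 < d h * B ^ (T - h)" "0 < d (Suc h) * B ^ (T - Suc h)"
      using digit_bounds(1)[of "(q, h, tp)" h] digit_bounds(1)[of "(q, h, tp)" "Suc h"] base_ge_2
      unfolding d_def by (intro mult_pos_pos; simp)+
    then have "d (h - 1) * B ^ (T - (h - 1)) < X0" using X0 by linarith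
    moreover have "U (h - 2) < (d (h - 1) + 1) * B ^ (T - (h - 1))"
      using U_less_next_digit[OF r(1)] r(2) by simp
    ultimately show ?thesis
      using leading_digit_separates[of 0 "B ^ (T - (h - 1))" "d (h - 1)" X0 "U (h - 2)" "int (g b)"]
        copy base_ge_2 by fastforce
  next
    case (trans p am c ap)
    have "Suc (h - 1) = h" "h < T" "T - h - 1 = T - Suc h" using h head_pos by arith+
    then show ?thesis
      using trans_u_compare[OF \<open>h < T\<close>, of p am c ap q "tp (h - 1)" "tp h" "tp (Suc h)"] trans U M(2)
      unfolding X0_def Y0_def M_def by auto
  next
    case (left p ap)
    then have "h = 2" using h by arith
    then have "U (h - 2) < pc p endm * B ^ (T - 1)"
      using U_less_state_digit[of 0 p endm] head_pos by simp
    then show ?thesis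
      using left(3) state_digit_le_left_u[of p ap] by linarith
  qed
qed

lemma trans_step:
  assumes "2 \<le> h"
  shows "\<exists>c\<in>Cs. c \<le> Wr (h - 2) \<and> greedy_step Cs (Wr (h - 2)) = Wr (Suc h)"
proof (rule window_step)
  have "Suc (h - 1) = h" "h - 1 \<le> T - 1" "Suc (h - 2) = h - 1" using assms head_pos by arith+
  have "U (h - 2) - U (Suc h) = trans_u f g K B T q (tp (h - 1)) (tp h) (tp (Suc h)) h"
    "Lo (Suc h) - Lo (h - 2) = trans_v \<delta> F f g K B T q (tp (h - 1)) (tp h) (tp (Suc h)) h"
    using U_trans_window[OF assms] Lo_trans_window[OF assms] by simp_all
  moreover show "(U (h - 2) - U (Suc h), Lo (Suc h) - Lo (h - 2)) \<in> coin_heads"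
    unfolding calculation using assms head_pos by (intro trans_head) auto
  ultimately show "X < U (h - 2) - U (Suc h) \<or> (X = U (h - 2) - U (Suc h) \<and> Y = Lo (Suc h) - Lo (h - 2))
      \<or> U (h - 2) < X"
    if "(X, Y) \<in> coin_heads" "B ^ (T - Suc (h - 2)) \<le> X" "X < B ^ Suc (T - Suc (h - 2))" for X Y
    using trans_candidate_separates[OF assms that(1)] that(2,3) \<open>Suc (h - 2) = h - 1\<close> by simp
qed (use assms head_pos in auto)

lemma U_left_window:
  assumes "h = 1"
  shows "U 0 = left_u q (tp 2) + U 2"
proof -
  have "d 1 = pc q endm" "d 2 = int (g (tp 2))"
    using d_head d_tape[of 2] endmarker_cell unfolding assms by auto
  then show ?thesis
    using U_Suc[of 0] U_Suc[of 1] tape_long unfolding left_u_def by (simp add: numeral_2_eq_2)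
qed

lemma Lo_left_window:
  assumes "h = 1"
  shows "Lo 2 = Lo 0 + left_v q (tp 2)"
proof -
  have "q \<notin> F" using halting_head assms by auto
  then obtain q' where \<delta>: "\<delta> q endm = (q', endm, R)" using endmarker by blast
  then have "tm_step \<delta> F (q, h, tp) = (q', 2, tp)"
    unfolding tm_step_def using \<open>q \<notin> F\<close> assms endmarker_cell by (auto simp: fun_upd_idem)
  then have "e 1 = int (g endm)" "e 2 = pc q' (tp 2)"
    unfolding e_def digit_def using endmarker_cell by auto
  then show ?thesis
    using Lo_Suc[of 0] Lo_Suc[of 1] \<delta> unfolding left_v_def by (simp add: numeral_2_eq_2)
qed

lemma left_candidate_separates:
  assumes h: "h = 1" and head: "(X, Y) \<in> coin_heads"
    and pos: "B ^ (T - 1) \<le> X" "X < B ^ Suc (T - 1)"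
  shows "X < left_u q (tp 2) \<or> (X = left_u q (tp 2) \<and> Y = left_v q (tp 2)) \<or> U 0 < X"
proof -
  have U: "U 0 = left_u q (tp 2) + U 2" "U 2 + 1 \<le> B ^ (T - 2)"
    using U_left_window[OF h] U_bounds[of 2] tape_long by auto
  have "pc q endm * B ^ (T - 1) \<le> left_u q (tp 2)"
    by (rule state_digit_le_left_u)
  moreover have "U 0 < (pc q endm + 1) * B ^ (T - 1)"
    using U_less_next_digit[of 0] d_head endmarker_cell tape_long unfolding h by simp
  ultimately have lead: "pc q endm * B ^ (T - 1) \<le> left_u q (tp 2)" "U 0 < (pc q endm + 1) * B ^ (T - 1)" .
  have a: "1 \<le> (1::nat)" "1 \<le> T" using tape_long by auto
  from head a pos show ?thesis
  proof (cases rule: head_at_position)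
    case (copy b)
    then show ?thesis
      using leading_digit_separates[of 0 "B ^ (T - 1)" "pc q endm" "left_u q (tp 2)" "U 0" "int (g b)"]
        lead tape_less_state_digit[of b q endm] base_ge_2 by fastforce
  next
    case (trans p am c ap)
    obtain v where X: "X = int (g am) * B ^ (T - 1) + v" and v: "0 \<le> v" "v < B ^ (T - 1)"
      using trans_u_leading_digit[OF trans(1)] trans(2) by metis
    then show ?thesis
      using leading_digit_separates[of v "B ^ (T - 1)" "pc q endm" "left_u q (tp 2)" "U 0" "int (g am)"]
        lead v X tape_less_state_digit[of am q endm] by fastforce
  next
    case (left p ap)
    then show ?thesis
      using left_u_compare[of p ap q "tp 2"] U by auto
  qed
qed

lemma left_step:
  assumes "h = 1"
  shows "\<exists>c\<in>Cs. c \<le> Wr 0 \<and> greedy_step Cs (Wr 0) = Wr 2"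
proof (rule window_step)
  have "q \<notin> F" using halting_head assms by auto
  have "U 0 - U 2 = left_u q (tp 2)" "Lo 2 - Lo 0 = left_v q (tp 2)"
    using U_left_window[OF assms] Lo_left_window[OF assms] by simp_all
  moreover show "(U 0 - U 2, Lo 2 - Lo 0) \<in> coin_heads"
    unfolding calculation using \<open>q \<notin> F\<close> by (rule left_head)
  ultimately show "X < U 0 - U 2 \<or> (X = U 0 - U 2 \<and> Y = Lo 2 - Lo 0) \<or> U 0 < X"
    if "(X, Y) \<in> coin_heads" "B ^ (T - Suc 0) \<le> X" "X < B ^ Suc (T - Suc 0)" for X Y
    using left_candidate_separates[OF assms that(1)] that(2,3) by simp
qed (use tape_long in auto)

lemma stage_greedy:
  "\<exists>m\<in>{T - 1, T - 2}. (\<forall>i<m. \<exists>c\<in>Cs. c \<le> (greedy_step Cs ^^ i) (Wr 0))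
     \<and> (greedy_step Cs ^^ m) (Wr 0) = Wr T"
proof -
  define gap where "gap = whi - wlo"
  \<comment> \<open>the number of digit positions rewritten by the first \<open>k\<close> coins of the stage\<close>
  define pos where "pos k = (if k < wlo then k else k + gap)" for k
  define m where "m = T - gap"
  have win: "1 \<le> wlo" "wlo < whi" "whi \<le> T" "gap = 1 \<or> gap = 2"
    unfolding gap_def wlo_def whi_def using head_pos tape_long by auto
  have step: "(\<exists>c\<in>Cs. c \<le> Wr (pos k)) \<and> greedy_step Cs (Wr (pos k)) = Wr (pos (Suc k))"
    if "k < m" for k
  proof -
    consider "Suc k < wlo" | "Suc k = wlo" | "wlo \<le> k" by linarith
    then show ?thesis
    proof cases
      case 1
      then show ?thesis using copy_step[of k] win unfolding pos_def by auto
    next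
      case 2
      then have "pos k = wlo - 1" "pos (Suc k) = whi" unfolding pos_def gap_def using win by auto
      then show ?thesis
        using left_step trans_step head_pos unfolding wlo_def whi_def
        by (cases "h = 1") (auto simp: numeral_2_eq_2)
    next
      case 3
      then have "k + gap < T" "whi < Suc (k + gap)" using that win unfolding m_def gap_def by auto
      then show ?thesis using copy_step[of "k + gap"] 3 unfolding pos_def by auto
    qed
  qed
  have "pos 0 = 0" "pos m = T" unfolding pos_def m_def gap_def using win by auto
  with funpow_trajectory[of m "\<lambda>W. \<exists>c\<in>Cs. c \<le> W" "Wr \<circ> pos" "greedy_step Cs"] step win
  show ?thesis unfolding m_def by auto
qed

end

lemma reachable_config_endmarker:
  assumes endmarker: "\<forall>q. q \<notin> F \<longrightarrow> (\<exists>q'. \<delta> q endm = (q', endm, R))"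
    and "(tm_step \<delta> F ^^ n) (init_config q0 endm blank x) = (q, h, tp)"
  shows "1 \<le> h \<and> tp 1 = endm"
  using assms(2)
proof (induction n arbitrary: q h tp)
  case 0
  then show ?case unfolding init_config_def by auto
next
  case (Suc n)
  obtain q1 h1 tp1 where c: "(tm_step \<delta> F ^^ n) (init_config q0 endm blank x) = (q1, h1, tp1)"
    by (metis prod.exhaust)
  have IH: "1 \<le> h1" "tp1 1 = endm" using Suc.IH[OF c] by auto
  have st: "tm_step \<delta> F (q1, h1, tp1) = (q, h, tp)" using Suc.prems c by simp
  show ?case
  proof (cases "q1 \<in> F")
    case True
    then show ?thesis using st IH unfolding tm_step_def by auto
  next
    case False
    obtain q' a' d where \<delta>: "\<delta> q1 (tp1 h1) = (q', a', d)" by (metis prod.exhaust)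
    show ?thesis
    proof (cases "h1 = 1")
      case True
      then have "a' = endm" "d = R" using endmarker False \<delta> IH by auto
      then show ?thesis using st False \<delta> IH True unfolding tm_step_def by auto
    next
      case False
      then have "2 \<le> h1" using IH by simp
      then show ?thesis using st \<open>q1 \<notin> F\<close> \<delta> IH unfolding tm_step_def by (auto split: if_splits)
    qed
  qed
qed

theorem lemma3p2:
  fixes \<delta> :: "'q::finite \<Rightarrow> 'a::finite \<Rightarrow> 'q \<times> 'a \<times> dir"
    and q0 qa qr :: 'q and blank endm :: 'a and Sig :: "'a set"
    and f :: "'q \<Rightarrow> nat" and g :: "'a \<Rightarrow> nat"
    and x :: "'a list" and T CM l j :: nat and B :: int
  defines "F \<equiv> {qa, qr}"
  defines "conf \<equiv> config_at \<delta> F q0 endm blank x"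
  defines "Cs \<equiv> coin_set \<delta> F f g (card (UNIV :: 'a set)) B T endm"
  assumes acc_rej: "qa \<noteq> qr"
    and Sig: "Sig \<subseteq> UNIV - {blank}" and x_in: "set x \<subseteq> Sig"
    and f_bij: "bij_betw f UNIV {1..(card (UNIV :: 'q set))}"
    and g_bij: "bij_betw g UNIV {1..(card (UNIV :: 'a set))}"
    and B_ge: "B \<ge> int (((card (UNIV :: 'q set)) + 1) * (card (UNIV :: 'a set)) + 2)"
    and endmarker: "\<forall>q. q \<notin> F \<longrightarrow> (\<exists>q'. \<delta> q endm = (q', endm, R))"
    and halting_shape: "\<forall>t\<ge>1. fst (conf t) \<in> F \<longrightarrow>
          fst (snd (conf t)) = 2 \<and> snd (snd (conf t)) 2 = blank \<and> snd (snd (conf t)) 3 = blank"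
    and T_def: "T = CM * length x ^ l"
    and T_ge: "T \<ge> length x + 3"
    and halts: "fst (conf (T + 1)) \<in> F"
    and head_lt: "\<forall>t\<ge>1. fst (snd (conf t)) < T"
    and j: "1 \<le> j" "j \<le> T"
  shows "\<exists>m \<in> {T - 1, T - 2}.
           (\<forall>i < m. \<exists>c \<in> Cs. c \<le> (greedy_step Cs ^^ i) (enc f g (card (UNIV :: 'a set)) B T (conf j) * bpow B T (int T - int j)))
         \<and> (greedy_step Cs ^^ m) (enc f g (card (UNIV :: 'a set)) B T (conf j) * bpow B T (int T - int j))
             = enc f g (card (UNIV :: 'a set)) B T (tm_step \<delta> F (conf j)) * bpow B T (int T - int j - 1)"
proof -
  define K where "K = card (UNIV :: 'a set)"
  define S where "S = card (UNIV :: 'q set)"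
  have g_range: "1 \<le> g a \<and> g a \<le> K" for a using bij_betwE[OF g_bij] unfolding K_def by auto
  have f_range: "1 \<le> f p \<and> f p \<le> S" for p using bij_betwE[OF f_bij] unfolding S_def by auto
  have base: "int (f p) * int K + int K + 2 \<le> B" for p
  proof -
    have "int (f p) * int K \<le> int S * int K" using f_range[of p] by (intro mult_right_mono) auto
    then show ?thesis using B_ge unfolding K_def[symmetric] S_def[symmetric] by (simp add: algebra_simps)
  qed
  interpret coin_setting \<delta> F f g K B T endm
    using g_range f_range base bij_betw_imp_inj_on[OF f_bij] bij_betw_imp_inj_on[OF g_bij] T_ge
    by unfold_locales auto
  obtain q h tp where cj: "conf j = (q, h, tp)" by (metis prod.exhaust)
  have "(tm_step \<delta> F ^^ (j - 1)) (init_config q0 endm blank x) = (q, h, tp)"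
    using cj unfolding conf_def config_at_def .
  then have "1 \<le> h" "tp 1 = endm"
    using reachable_config_endmarker[where \<delta> = \<delta> and F = F and endm = endm] endmarker by blast+
  moreover have "h < T" "q \<in> F \<Longrightarrow> h = 2" using head_lt halting_shape j cj by force+
  ultimately interpret config_step \<delta> F f g K B T endm q h tp j
    using endmarker j by unfold_locales auto
  show ?thesis
    using stage_greedy unfolding Cs_def K_def[symmetric] cj Wr_start Wr_end .
qed

end
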